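(* Assume $p(\cdot\mid z)$ is an additive energy distribution for all $z\in\mathcal{Z}^{\times}$, i.e. $p(x\mid z)=\frac{1}{\mathbb{Z}(z)}\exp(-\langle\sigma(z),E(x)\rangle)$ for some $E:\mathbb{R}^n\to\mathbb{R}^{md}$ with $\mathbb{Z}(z)=\int\exp(-\langle\sigma(z),E(x)\rangle)dx<\infty$ and support $\mathbb{R}^n$. Let $q(x,z)=q(z)q(x\mid z)$ be a test distribution with $q(x\mid z)=p(x\mid z)$ for all $z\in\mathcal{Z}^{\times}$, whose attribute support $\mathcal{Z}^{\mathsf{test}}$ satisfies $\mathcal{Z}^{\mathsf{test}}\subseteq\mathcal{Z}^{\times}$ and $\mathcal{Z}^{\mathsf{test}}\subseteq\mathsf{DAff}(\mathcal{Z}^{\mathsf{train}})$. Let $\hat E:\mathbb{R}^n\to\mathbb{R}^{md}$ and $\hat B:\mathcal{Z}^{\mathsf{train}}\to\mathbb{R}$ be such that the additive energy classifier $$\hat p(z\mid x)=\frac{\exp(-\langle\sigma(z),\hat E(x)\rangle+\log p(z)-\hat B(z))}{\sum_{z'\in\mathcal{Z}^{\mathsf{train}}}\exp(-\langle\sigma(z'),\hat E(x)\rangle+\log p(z')-\hat B(z'))},\quad z\in\mathcal{Z}^{\mathsf{train}},$$ satisfies $\hat p(z\mid x)=p(z\mid x)$ for all $z\in\mathcal{Z}^{\mathsf{train}}$ and all $x\in\mathbb{R}^n$. Define for $z\in\mathcal{Z}^{\times}$ the extrapolated bias $$B^\star(z)=\log\mathbb{E}_{x\sim p(x)}\Big[\frac{\exp(-\langle\sigma(z),\hat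 E(x)\rangle)}{\sum_{\tilde z\in\mathcal{Z}^{\mathsf{train}}}\exp(-\langle\sigma(\tilde z),\hat E(x)\rangle+\log p(\tilde z)-\hat B(\tilde z))}\Big],$$ where $p(x)$ is the training marginal of $x$. Let $\hat q$ be a probability distribution on attribute vectors with $\hat q(z)=q(z)$ for all $z\in\mathcal{Z}^{\mathsf{test}}$, and define for $z\in\mathcal{Z}^{\mathsf{test}}$ $$\hat q(z\mid x)=\frac{\exp(-\langle\sigma(z),\hat E(x)\rangle+\log\hat q(z)-B^\star(z))}{\sum_{z'\in\mathcal{Z}^{\mathsf{test}}}\exp(-\langle\sigma(z'),\hat E(x)\rangle+\log\hat q(z')-B^\star(z'))}.$$ Then $\hat q(z\mid x)=q(z\mid x)$ for all $z\in\mathcal{Z}^{\mathsf{test}}$ and all $x\in\mathbb{R}^n$.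
   Context: An attribute vector is $z=(z_1,\dots,z_m)$ with each $z_i\in\{1,\dots,d\}$; $\mathcal{Z}=\{1,\dots,d\}^m$. $\sigma(z)\in\{0,1\}^{md}$ is the concatenation of the one-hot encodings of $z_1,\dots,z_m$. For $\mathcal{A}=\{z^{(1)},\dots,z^{(k)}\}\subseteq\mathcal{Z}$, $\mathsf{DAff}(\mathcal{A})=\{z\in\mathcal{Z}:\exists\alpha\in\mathbb{R}^k,\ \sum_i\alpha_i=1,\ \sigma(z)=\sum_i\alpha_i\sigma(z^{(i)})\}$. The training distribution is $p(x,z)=p(z)p(x\mid z)$ on $\mathbb{R}^n\times\mathcal{Z}$, $\mathcal{Z}^{\mathsf{train}}$ is the support of $p(z)$, $\mathcal{Z}_i^{\mathsf{train}}$ the set of values of the $i$-th coordinate on $\mathcal{Z}^{\mathsf{train}}$, and $\mathcal{Z}^{\times}=\mathcal{Z}_1^{\mathsf{train}}\times\cdots\times\mathcal{Z}_m^{\mathsf{train}}$. $p(z\mid x)$ and $q(z\mid x)$ denote the posteriors of attributes given $x$ under $p$ and $q$. *)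

theory Defs
  imports "HOL-Analysis.Analysis"
begin

text \<open>Attribute vectors z = (z_1,...,z_m), z_i in {1..d}, are modelled as functions
  'm \<Rightarrow> 'd for finite types 'm (CARD = m) and 'd (CARD = d).
  R^{md} is real^('m \<times> 'd); sigma z is the concatenated one-hot encoding.\<close>

definition sigma :: "('m::finite \<Rightarrow> 'd::finite) \<Rightarrow> real^('m \<times> 'd)" where
  "sigma z = (\<chi> ij. if z (fst ij) = snd ij then 1 else 0)"

definition DAff :: "('m::finite \<Rightarrow> 'd::finite) set \<Rightarrow> ('m \<Rightarrow> 'd) set" where
  "DAff A = {z. \<exists>\<alpha> :: ('m \<Rightarrow> 'd) \<Rightarrow> real.
                 (\<Sum>a\<in>A. \<alpha> a) = 1 \<and> sigma z = (\<Sum>a\<in>A. \<alpha> a *\<^sub>R sigma a)}"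

definition is_pmf :: "(('m::finite \<Rightarrow> 'd::finite) \<Rightarrow> real) \<Rightarrow> bool" where
  "is_pmf f \<longleftrightarrow> (\<forall>z. 0 \<le> f z) \<and> (\<Sum>z\<in>UNIV. f z) = 1"

definition supp :: "(('m::finite \<Rightarrow> 'd::finite) \<Rightarrow> real) \<Rightarrow> ('m \<Rightarrow> 'd) set" where
  "supp f = {z. f z \<noteq> 0}"

definition Zprod :: "('m \<Rightarrow> 'd) set \<Rightarrow> ('m \<Rightarrow> 'd) set" where
  "Zprod S = {z. \<forall>i. z i \<in> (\<lambda>w. w i) ` S}"

definition Zc :: "(real^'n \<Rightarrow> real^('m::finite \<times> 'd::finite)) \<Rightarrow> ('m \<Rightarrow> 'd) \<Rightarrow> real" where
  "Zc E z = integral\<^sup>L lborel (\<lambda>x. exp (- (sigma z \<bullet> E x)))"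

definition energy_cond :: "(real^'n \<Rightarrow> real^('m::finite \<times> 'd::finite)) \<Rightarrow> ('m \<Rightarrow> 'd) \<Rightarrow> real^'n \<Rightarrow> real" where
  "energy_cond E z x = exp (- (sigma z \<bullet> E x)) / Zc E z"

definition marg :: "(('m::finite \<Rightarrow> 'd::finite) \<Rightarrow> real) \<Rightarrow> (real^'n \<Rightarrow> real^('m \<times> 'd)) \<Rightarrow> real^'n \<Rightarrow> real" where
  "marg pz E x = (\<Sum>z\<in>supp pz. pz z * energy_cond E z x)"

definition posterior :: "(('m::finite \<Rightarrow> 'd::finite) \<Rightarrow> real) \<Rightarrow> (real^'n \<Rightarrow> real^('m \<times> 'd)) \<Rightarrow> ('m \<Rightarrow> 'd) \<Rightarrow> real^'n \<Rightarrow> real" where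
  "posterior pz E z x = pz z * energy_cond E z x / marg pz E x"

definition clf_denom :: "('m::finite \<Rightarrow> 'd::finite) set \<Rightarrow> (('m \<Rightarrow> 'd) \<Rightarrow> real) \<Rightarrow> (real^'n \<Rightarrow> real^('m \<times> 'd)) \<Rightarrow> (('m \<Rightarrow> 'd) \<Rightarrow> real) \<Rightarrow> real^'n \<Rightarrow> real" where
  "clf_denom S pr Eh B x = (\<Sum>z'\<in>S. exp (- (sigma z' \<bullet> Eh x) + ln (pr z') - B z'))"

definition clf :: "('m::finite \<Rightarrow> 'd::finite) set \<Rightarrow> (('m \<Rightarrow> 'd) \<Rightarrow> real) \<Rightarrow> (real^'n \<Rightarrow> real^('m \<times> 'd)) \<Rightarrow> (('m \<Rightarrow> 'd) \<Rightarrow> real) \<Rightarrow> ('m \<Rightarrow> 'd) \<Rightarrow> real^'n \<Rightarrow> real" where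
  "clf S pr Eh B z x = exp (- (sigma z \<bullet> Eh x) + ln (pr z) - B z) / clf_denom S pr Eh B x"

definition Bstar :: "(('m::finite \<Rightarrow> 'd::finite) \<Rightarrow> real) \<Rightarrow> (real^'n \<Rightarrow> real^('m \<times> 'd)) \<Rightarrow> (real^'n \<Rightarrow> real^('m \<times> 'd)) \<Rightarrow> (('m \<Rightarrow> 'd) \<Rightarrow> real) \<Rightarrow> ('m \<Rightarrow> 'd) \<Rightarrow> real" where
  "Bstar pz E Eh Bh z = ln (integral\<^sup>L lborel (\<lambda>x. marg pz E x *
       (exp (- (sigma z \<bullet> Eh x)) / clf_denom (supp pz) pz Eh Bh x)))"

end

theory Submission
  imports Defs
begin

text \<open>On the training support, equality of the two posteriors says, after taking logarithms,
  that the energy gap \<open>\<langle>\<sigma>(a), \<hat>E(x) - E(x)\<rangle>\<close> splits as a constant in \<open>a\<close> plus a function of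
  \<open>x\<close>. Since \<open>\<sigma>\<close> of a test attribute is an affine combination of training encodings, the same
  splitting holds on \<open>DAff\<close>, so \<open>exp(-\<langle>\<sigma>(z), \<hat>E(x)\<rangle>)\<close> is \<open>p(x|z)\<close> up to a factor constant
  in \<open>x\<close> and a factor independent of \<open>z\<close>. The extrapolated bias \<open>B\<^sup>\<star>\<close> absorbs exactly the constant
  factor, and the \<open>z\<close>-independent one cancels in the normalisation of the test classifier.\<close>

lemma integral_pos_lborel:
  fixes f :: "'a::euclidean_space \<Rightarrow> real"
  assumes "integrable lborel f" and "\<And>x. f x > 0"
  shows "integral\<^sup>L lborel f > 0"
proof -
  have "\<not> (AE x in lborel. f x = 0)"
  proof
    assume "AE x in lborel. f x = 0"
    then have "AE (x::'a) in lborel. False"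
      by eventually_elim (metis assms(2) less_irrefl)
    then have "emeasure lborel (UNIV::'a set) = 0"
      by (subst (asm) AE_iff_measurable[of UNIV]) auto
    then show False by simp
  qed
  then have "integral\<^sup>L lborel f \<noteq> 0"
    using integral_nonneg_eq_0_iff_AE[OF assms(1)] assms(2) by (simp add: less_imp_le)
  moreover have "integral\<^sup>L lborel f \<ge> 0"
    using assms(2) by (simp add: less_imp_le)
  ultimately show ?thesis by simp
qed

lemma is_pmf_pos: "is_pmf f \<Longrightarrow> z \<in> supp f \<Longrightarrow> f z > 0"
  unfolding is_pmf_def supp_def by (simp add: order_le_neq_trans)

lemma is_pmf_supp_nonempty: "is_pmf f \<Longrightarrow> supp f \<noteq> {}"
  unfolding is_pmf_def supp_def by (metis (mono_tags) empty_Collect_eq sum.neutral zero_neq_one)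

lemma subset_Zprod: "S \<subseteq> Zprod S"
  unfolding Zprod_def by auto

lemma Zc_pos: "integrable lborel (\<lambda>x. exp (- (sigma z \<bullet> E x))) \<Longrightarrow> Zc E z > 0"
  unfolding Zc_def by (erule integral_pos_lborel) simp

lemma energy_cond_pos: "integrable lborel (\<lambda>x. exp (- (sigma z \<bullet> E x))) \<Longrightarrow> energy_cond E z x > 0"
  unfolding energy_cond_def by (simp add: Zc_pos)

lemma marg_pos:
  assumes "is_pmf pz" and "\<And>z. z \<in> supp pz \<Longrightarrow> integrable lborel (\<lambda>x. exp (- (sigma z \<bullet> E x)))"
  shows "marg pz E x > 0"
  unfolding marg_def
  by (rule sum_pos) (simp_all add: assms is_pmf_supp_nonempty is_pmf_pos energy_cond_pos)

lemma clf_denom_pos: "S \<noteq> {} \<Longrightarrow> clf_denom S pr Eh B x > 0"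
  unfolding clf_denom_def by (rule sum_pos) simp_all

lemma clf_eq_posterior_energy_gap:
  assumes "clf S pz Eh Bh a x = posterior pz E a x"
    and "pz a > 0" and "Zc E a > 0" and "clf_denom S pz Eh Bh x > 0" and "marg pz E x > 0"
  shows "sigma a \<bullet> (Eh x - E x) = (ln (Zc E a) - Bh a) - ln (clf_denom S pz Eh Bh x / marg pz E x)"
proof -
  have "ln (clf S pz Eh Bh a x) = - (sigma a \<bullet> Eh x) + ln (pz a) - Bh a - ln (clf_denom S pz Eh Bh x)"
    unfolding clf_def using assms(4) by (simp add: ln_div)
  moreover have "ln (posterior pz E a x) = ln (pz a) - (sigma a \<bullet> E x) - ln (Zc E a) - ln (marg pz E x)"
    unfolding posterior_def energy_cond_def using assms(2,3,5) by (simp add: ln_div ln_mult)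
  ultimately show ?thesis
    using assms(1,4,5) by (simp add: ln_div inner_diff_right)
qed

text \<open>The offset \<open>w\<close> survives the affine combination because the weights sum to one.\<close>
lemma DAff_inner_shift:
  fixes F :: "'x \<Rightarrow> real^('m::finite \<times> 'd::finite)"
  assumes "z \<in> DAff A" and "\<And>a x. a \<in> A \<Longrightarrow> sigma a \<bullet> F x = c a + w x"
  shows "\<exists>C. \<forall>x. sigma z \<bullet> F x = C + w x"
proof -
  obtain \<alpha> where \<alpha>_sum: "(\<Sum>a\<in>A. \<alpha> a) = 1" and \<sigma>_z: "sigma z = (\<Sum>a\<in>A. \<alpha> a *\<^sub>R sigma a)"
    using assms(1) unfolding DAff_def by blast
  have "sigma z \<bullet> F x = (\<Sum>a\<in>A. \<alpha> a * c a) + w x" for x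
  proof -
    have "sigma z \<bullet> F x = (\<Sum>a\<in>A. \<alpha> a * c a + \<alpha> a * w x)"
      unfolding \<sigma>_z inner_sum_left by (intro sum.cong) (simp_all add: assms(2) distrib_left)
    also have "\<dots> = (\<Sum>a\<in>A. \<alpha> a * c a) + w x"
      by (simp add: sum.distrib \<alpha>_sum flip: sum_distrib_right)
    finally show ?thesis .
  qed
  then show ?thesis by blast
qed

lemma Bstar_eq_if_energy_proportional:
  assumes "\<And>x. exp (- (sigma z \<bullet> Eh x))
             = k * (clf_denom (supp pz) pz Eh Bh x / marg pz E x) * exp (- (sigma z \<bullet> E x))"
    and "\<And>x. clf_denom (supp pz) pz Eh Bh x \<noteq> 0" and "\<And>x. marg pz E x \<noteq> 0"
  shows "Bstar pz E Eh Bh z = ln (k * Zc E z)"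
proof -
  have "marg pz E x * (exp (- (sigma z \<bullet> Eh x)) / clf_denom (supp pz) pz Eh Bh x)
        = k * exp (- (sigma z \<bullet> E x))" for x
    unfolding assms(1) using assms(2,3)[of x] by (simp add: field_simps)
  then show ?thesis
    unfolding Bstar_def Zc_def by simp
qed

lemma clf_numerator_Bstar:
  assumes gap: "\<And>y. sigma z \<bullet> (Eh y - E y)
                  = C - ln (clf_denom (supp pz) pz Eh Bh y / marg pz E y)"
    and D_pos: "\<And>y. clf_denom (supp pz) pz Eh Bh y > 0" and M_pos: "\<And>y. marg pz E y > 0"
    and "Zc E z > 0" and "qz z > 0"
  shows "exp (- (sigma z \<bullet> Eh x) + ln (qz z) - Bstar pz E Eh Bh z)
         = clf_denom (supp pz) pz Eh Bh x / marg pz E x * (qz z * energy_cond E z x)"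
proof -
  have proportional: "exp (- (sigma z \<bullet> Eh y))
      = exp (- C) * (clf_denom (supp pz) pz Eh Bh y / marg pz E y) * exp (- (sigma z \<bullet> E y))" for y
  proof -
    have "- (sigma z \<bullet> Eh y) = - C + ln (clf_denom (supp pz) pz Eh Bh y / marg pz E y) + - (sigma z \<bullet> E y)"
      using gap[of y] by (simp add: inner_diff_right)
    then have "exp (- (sigma z \<bullet> Eh y))
        = exp (- C) * exp (ln (clf_denom (supp pz) pz Eh Bh y / marg pz E y)) * exp (- (sigma z \<bullet> E y))"
      by (metis exp_add)
    then show ?thesis
      using D_pos[of y] M_pos[of y] by simp
  qed
  have Bstar: "Bstar pz E Eh Bh z = - C + ln (Zc E z)"
    using Bstar_eq_if_energy_proportional[OF proportional] D_pos M_pos \<open>Zc E z > 0\<close>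
    by (simp add: less_imp_neq[symmetric] ln_mult)
  have "exp (- (sigma z \<bullet> Eh x) + ln (qz z) - Bstar pz E Eh Bh z)
        = exp (- (sigma z \<bullet> Eh x)) * qz z * exp C / Zc E z"
    unfolding Bstar using \<open>Zc E z > 0\<close> \<open>qz z > 0\<close> by (simp add: exp_add exp_diff exp_minus field_simps)
  also have "\<dots> = clf_denom (supp pz) pz Eh Bh x / marg pz E x * (qz z * energy_cond E z x)"
    unfolding proportional energy_cond_def by (simp add: exp_minus field_simps)
  finally show ?thesis .
qed

lemma clf_eq_posterior_if_proportional:
  assumes "\<And>z. z \<in> supp qz \<Longrightarrow> exp (- (sigma z \<bullet> Eh x) + ln (pr z) - B z) = r * (qz z * energy_cond E z x)"
    and "r \<noteq> 0" and "z \<in> supp qz"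
  shows "clf (supp qz) pr Eh B z x = posterior qz E z x"
proof -
  have "clf_denom (supp qz) pr Eh B x = r * marg qz E x"
    unfolding clf_denom_def marg_def sum_distrib_left by (intro sum.cong refl assms(1))
  then show ?thesis
    unfolding clf_def posterior_def using assms(1-3) by simp
qed

theorem theorem2:
  fixes pz qz qh :: "('m::finite \<Rightarrow> 'd::finite) \<Rightarrow> real"
    and E Eh :: "real^'n \<Rightarrow> real^('m \<times> 'd)"
    and Bh :: "('m \<Rightarrow> 'd) \<Rightarrow> real"
  assumes p_pmf: "is_pmf pz"
    and E_int: "\<And>z. z \<in> Zprod (supp pz) \<Longrightarrow> integrable lborel (\<lambda>x. exp (- (sigma z \<bullet> E x)))"
    and q_pmf: "is_pmf qz"
    and test_prod: "supp qz \<subseteq> Zprod (supp pz)"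
    and test_daff: "supp qz \<subseteq> DAff (supp pz)"
    and clf_eq: "\<And>z x. z \<in> supp pz \<Longrightarrow> clf (supp pz) pz Eh Bh z x = posterior pz E z x"
    and qh_pmf: "is_pmf qh"
    and qh_eq: "\<And>z. z \<in> supp qz \<Longrightarrow> qh z = qz z"
  shows "\<forall>z \<in> supp qz. \<forall>x. clf (supp qz) qh Eh (Bstar pz E Eh Bh) z x = posterior qz E z x"
proof -
  let ?D = "clf_denom (supp pz) pz Eh Bh" and ?M = "marg pz E"
  have E_int_train: "integrable lborel (\<lambda>x. exp (- (sigma a \<bullet> E x)))" if "a \<in> supp pz" for a
    using E_int subset_Zprod that by blast
  have D_pos: "?D x > 0" for x
    by (simp add: clf_denom_pos is_pmf_supp_nonempty p_pmf)
  have M_pos: "?M x > 0" for x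
    by (rule marg_pos[OF p_pmf E_int_train])
  have train_gap: "sigma a \<bullet> (Eh x - E x) = (ln (Zc E a) - Bh a) + - ln (?D x / ?M x)"
    if "a \<in> supp pz" for a x
    using clf_eq_posterior_energy_gap[OF clf_eq[OF that] is_pmf_pos[OF p_pmf that]
        Zc_pos[OF E_int_train[OF that]] D_pos M_pos] by simp
  have numerator: "exp (- (sigma z \<bullet> Eh x) + ln (qh z) - Bstar pz E Eh Bh z)
                   = ?D x / ?M x * (qz z * energy_cond E z x)" if z: "z \<in> supp qz" for z x
  proof -
    have "\<exists>C. \<forall>y. sigma z \<bullet> (Eh y - E y) = C + - ln (?D y / ?M y)"
      using subsetD[OF test_daff z] train_gap by (rule DAff_inner_shift)
    then obtain C where "\<forall>y. sigma z \<bullet> (Eh y - E y) = C + - ln (?D y / ?M y)" ..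
    then show ?thesis
      unfolding qh_eq[OF z]
      by (intro clf_numerator_Bstar[where C = C] D_pos M_pos is_pmf_pos[OF q_pmf z]
          Zc_pos[OF E_int[OF subsetD[OF test_prod z]]]) simp
  qed
  show ?thesis
  proof (intro ballI allI)
    fix z x assume "z \<in> supp qz"
    show "clf (supp qz) qh Eh (Bstar pz E Eh Bh) z x = posterior qz E z x"
      using numerator D_pos[of x] M_pos[of x] \<open>z \<in> supp qz\<close>
      by (intro clf_eq_posterior_if_proportional[where r = "?D x / ?M x"]) simp_all
  qed
qed

end
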